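(* Let $p\equiv 1\pmod 4$ be a prime dividing $n$, and let $Q_p\subseteq\mathbb{Z}/p\mathbb{Z}$ be the set of nonzero quadratic residues modulo $p$. Let $a,b,c$ be integers coprime to $p$ with $\left(\frac{a}{p}\right)=-\left(\frac{c}{p}\right)$, and put $J_+=\{aq+b \bmod p: q\in Q_p\}$ and $J_-=\{cq-b\bmod p : q\in Q_p\}$ (viewed as subsets of $\{0,\dots,p-1\}$). Let $A$ be a subgroup of $(\mathbb{Z}/n\mathbb{Z})^\times$ which is the disjoint union $$A=\{jn/p+1\bmod n: j\in J_+\}\sqcup\{jn/p-1 \bmod n: j\in J_-\},$$ and let $X=A\cdot 1=A$. Then for $y\in\mathbb{Z}/n\mathbb{Z}$: if $p\mid y$, then $\sigma_X(y)$ lies in the real interval $[1-p,p-1]$; if $p\nmid y$, then $z=\sigma_X(y)$ satisfies $(\operatorname{Re} z)^2+(\operatorname{Im} z)^2/p=1$.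
   Context: Write $e(\theta)=\exp(2\pi i\theta)$. For a subgroup $A$ of $(\mathbb{Z}/n\mathbb{Z})^\times$ and $r\in\mathbb{Z}/n\mathbb{Z}$, let $X=Ar=\{ar:a\in A\}$ and $\sigma_X(y)=\sum_{x\in X}e\left(\frac{xy}{n}\right)$ for $y\in\mathbb{Z}/n\mathbb{Z}$. $\left(\frac{\cdot}{p}\right)$ denotes the Legendre symbol. The condition $p\mid y$ is well defined for $y\in\mathbb{Z}/n\mathbb{Z}$ since $p\mid n$. *)

theory Defs
  imports "HOL-Analysis.Analysis" "HOL-Number_Theory.Number_Theory" "HOL-Algebra.Multiplicative_Group"
begin

definition e_fun :: "real \<Rightarrow> complex" where
  "e_fun \<theta> = exp (2 * of_real pi * \<i> * of_real \<theta>)"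

text \<open>Residues mod n are represented by integers in {0..n-1}; the orbit X = A r.\<close>
definition orbit_set :: "int \<Rightarrow> int set \<Rightarrow> int \<Rightarrow> int set" where
  "orbit_set n A r = (\<lambda>a. (a * r) mod n) ` A"

definition sigma_X :: "int \<Rightarrow> int set \<Rightarrow> int \<Rightarrow> complex" where
  "sigma_X n X y = (\<Sum>x\<in>X. e_fun (real_of_int (x * y) / real_of_int n))"

definition nonzero_QR :: "int \<Rightarrow> int set" where
  "nonzero_QR p = {q. 1 \<le> q \<and> q \<le> p - 1 \<and> QuadRes p q}"

end

theory Submission
  imports Defs
begin

text \<open>
Write \<open>n = p m\<close>. An element of the first half of \<open>A\<close> is \<open>j m + 1\<close> with \<open>j \<equiv> a q + b (mod p)\<close>,
so \<open>e(x y / n) = e(y / n) e(b y / p) e(a y q / p)\<close>; summing over \<open>q \<in> Q\<^sub>p\<close> and doing the same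
for the second half gives \<open>\<sigma>\<^sub>X(y) = z S(a y) + z\<^sup>* S(c y)\<close> with \<open>z = e(y / n) e(b y / p)\<close>
of modulus one and \<open>S(t) = \<Sum>\<^sub>q\<^sub>\<in>\<^sub>Q\<^sub>p e(t q / p)\<close>.
If \<open>p | y\<close> both sums equal \<open>|Q\<^sub>p| = (p - 1)/2\<close>, so \<open>\<sigma>\<^sub>X(y) = (p - 1) Re z\<close>.
Otherwise \<open>a y\<close> and \<open>c y\<close> have opposite quadratic characters, so the two sums together run over
all nonzero residues and \<open>S(a y) + S(c y) = -1\<close>. The Gauss sum \<open>g = 1 + 2 S(a y)\<close> has
\<open>|g|\<^sup>2 = p\<close> and is real because \<open>-1\<close> is a square modulo \<open>p \<equiv> 1 (mod 4)\<close>; hence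
\<open>\<sigma>\<^sub>X(y) = -Re z + \<i> g Im z\<close>, which lies on the ellipse.
\<close>

lemma e_fun_add: "e_fun (x + y) = e_fun x * e_fun y"
  unfolding e_fun_def by (simp add: distrib_left exp_add)

lemma e_fun_of_int: "e_fun (of_int k) = 1"
  unfolding e_fun_def using exp_integer_2pi[of "of_int k"] by (simp add: mult_ac)

lemma cnj_e_fun: "cnj (e_fun x) = e_fun (- x)"
  unfolding e_fun_def by (simp add: exp_cnj)

lemma norm_e_fun: "norm (e_fun x) = 1"
proof -
  have "2 * of_real pi * \<i> * of_real x = \<i> * of_real (2 * pi * x)" by simp
  then show ?thesis unfolding e_fun_def by (metis norm_exp_i_times)
qed

lemma e_fun_of_nat_mult: "e_fun (of_nat v * x) = e_fun x ^ v"
  unfolding e_fun_def using exp_of_nat_mult[of v "2 * of_real pi * \<i> * of_real x"]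
  by (simp add: mult_ac)

lemma e_fun_eq_1_imp_int: "e_fun x = 1 \<Longrightarrow> \<exists>k::int. x = of_int k"
  unfolding e_fun_def exp_eq_1 by auto

definition e_mod :: "int \<Rightarrow> int \<Rightarrow> complex" where
  "e_mod m k = e_fun (of_int k / of_int m)"

lemma e_mod_add: "e_mod m (k + l) = e_mod m k * e_mod m l"
  unfolding e_mod_def by (simp add: add_divide_distrib e_fun_add)

lemma e_mod_0 [simp]: "e_mod m 0 = 1"
  using e_fun_of_int[of 0] unfolding e_mod_def by simp

lemma e_mod_cong:
  assumes "m > 0" "[k = l] (mod m)"
  shows "e_mod m k = e_mod m l"
proof -
  obtain j where j: "k = l + m * j"
    using assms(2) by (metis cong_iff_lin cong_sym)
  have "e_mod m k = e_fun (of_int l / of_int m + of_int j)"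
    unfolding e_mod_def j using assms(1) by (simp add: field_simps)
  then show ?thesis unfolding e_fun_add e_fun_of_int e_mod_def by simp
qed

lemma e_mod_mod: "m > 0 \<Longrightarrow> e_mod m (k mod m) = e_mod m k"
  by (rule e_mod_cong) (auto simp: cong_def)

lemma e_mod_dvd: "m > 0 \<Longrightarrow> m dvd k \<Longrightarrow> e_mod m k = 1"
  using e_mod_cong[of m k 0] by (simp add: cong_0_iff)

lemma cnj_e_mod: "cnj (e_mod m k) = e_mod m (- k)"
  unfolding e_mod_def cnj_e_fun by simp

lemma norm_e_mod: "norm (e_mod m k) = 1"
  unfolding e_mod_def by (rule norm_e_fun)

lemma e_mod_neq_1:
  assumes "m > 0" "\<not> m dvd k"
  shows "e_mod m k \<noteq> 1"
proof
  assume "e_mod m k = 1"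
  then obtain j where "of_int k / of_int m = (of_int j :: real)"
    unfolding e_mod_def using e_fun_eq_1_imp_int by blast
  then have "k = m * j" using assms(1)
    by (metis (no_types, opaque_lifting) divide_eq_eq mult.commute of_int_eq_iff of_int_mult
        of_int_pos order_less_irrefl)
  then show False using assms by auto
qed

lemma e_mod_mult_of_nat: "e_mod m (k * int v) = e_mod m k ^ v"
  unfolding e_mod_def using e_fun_of_nat_mult[of v "of_int k / of_int m"] by (simp add: mult_ac)

lemma sum_e_mod:
  assumes "m > 0"
  shows "(\<Sum>y\<in>{0..<m}. e_mod m (k * y)) = (if m dvd k then of_int m else 0)"
proof -
  have "(\<Sum>y\<in>{0..<m}. e_mod m (k * y)) = (\<Sum>v<nat m. e_mod m (k * int v))"
    by (rule sum.reindex_bij_witness[of _ int nat]) (use assms in auto)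
  also have "\<dots> = (\<Sum>v<nat m. e_mod m k ^ v)" by (simp add: e_mod_mult_of_nat)
  also have "\<dots> = (if m dvd k then of_int m else 0)"
  proof (cases "m dvd k")
    case True
    then show ?thesis using e_mod_dvd[OF assms] assms by simp
  next
    case False
    have "e_mod m k ^ nat m = e_mod m (k * m)"
      using e_mod_mult_of_nat[of m k "nat m"] assms by simp
    also have "\<dots> = 1" using e_mod_dvd assms by simp
    finally show ?thesis
      using False e_mod_neq_1[OF assms False] by (simp add: sum_gp_strict)
  qed
  finally show ?thesis .
qed

lemma bij_betw_add_mod:
  assumes "(m::int) > 0"
  shows "bij_betw (\<lambda>x. (x + c) mod m) {0..<m} {0..<m}"
  by (rule bij_betw_byWitness[where f' = "\<lambda>x. (x - c) mod m"]) (use assms in \<open>auto simp: mod_simps\<close>)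

lemma sum_shift_mod:
  assumes "(m::int) > 0" "\<And>x. F (x mod m) = F x"
  shows "(\<Sum>x\<in>{0..<m}. F (x + c)) = (\<Sum>x\<in>{0..<m}. F x)"
  using sum.reindex_bij_betw[OF bij_betw_add_mod[OF assms(1), of c], of F] assms(2) by simp

lemma Legendre_mod: "Legendre (x mod p) p = Legendre x p"
  unfolding Legendre_def QuadRes_def cong_def by simp

lemma Legendre_values: "Legendre x p \<in> {-1, 0, 1}"
  unfolding Legendre_def by auto

lemma Legendre_coprime:
  assumes "prime (p::int)" "coprime x p"
  shows "Legendre x p = 1 \<or> Legendre x p = -1"
proof -
  have "\<not> [x = 0] (mod p)"
    using assms by (metis cong_0_iff coprime_absorb_right not_prime_unit)
  then show ?thesis unfolding Legendre_def by auto
qed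

lemma sign_eq_if_cong:
  assumes "(p::int) > 2" "x \<in> {-1, 0, 1}" "y \<in> {-1, 0, 1}" "[x = y] (mod p)"
  shows "x = y"
proof -
  have "p dvd x - y" using assms(4) by (simp add: cong_iff_dvd_diff)
  then obtain k where k: "x - y = p * k" by (elim dvdE)
  have "k = 0"
  proof (rule ccontr)
    assume "k \<noteq> 0"
    then have "\<bar>p * k\<bar> \<ge> p" using assms(1) by (simp add: abs_mult)
    moreover have "\<bar>x - y\<bar> \<le> 2" using assms(2,3) by auto
    ultimately show False using k assms(1) by linarith
  qed
  then show ?thesis using k by simp
qed

lemma Legendre_mult:
  assumes "prime (p::int)" "p > 2"
  shows "Legendre (x * y) p = Legendre x p * Legendre y p"
proof -
  have P: "prime (nat p)" "2 < nat p" and pP: "p = int (nat p)" using assms by simp_all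
  have "[Legendre (x * y) p = (x * y) ^ ((nat p - 1) div 2)] (mod p)"
    using euler_criterion[OF P] pP by simp
  moreover have "[Legendre x p * Legendre y p = x ^ ((nat p - 1) div 2) * y ^ ((nat p - 1) div 2)] (mod p)"
    using euler_criterion[OF P, of x] euler_criterion[OF P, of y] pP by (simp add: cong_mult)
  ultimately have "[Legendre (x * y) p = Legendre x p * Legendre y p] (mod p)"
    unfolding power_mult_distrib by (metis cong_sym cong_trans)
  moreover have "Legendre x p * Legendre y p \<in> {-1, 0, 1}"
    using Legendre_values[of x p] Legendre_values[of y p] by auto
  ultimately show ?thesis
    using sign_eq_if_cong[OF assms(2) Legendre_values] by blast
qed

lemma Legendre_minus_one:
  assumes "prime (p::int)" "p mod 4 = 1"
  shows "Legendre (-1) p = 1"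
proof -
  have p2: "p > 2" using prime_gt_1_int[OF assms(1)] assms(2) by presburger
  have P: "prime (nat p)" "2 < nat p" and pP: "p = int (nat p)" using assms p2 by simp_all
  obtain k where "p = 4 * k + 1" using assms(2) by (metis mod_div_mult_eq add.commute mult.commute)
  then have "(nat p - 1) div 2 = 2 * nat k" using p2 by (simp add: nat_add_distrib nat_mult_distrib)
  then have "even ((nat p - 1) div 2)" by simp
  then have "[Legendre (-1) p = 1] (mod p)"
    using euler_criterion[OF P, of "-1"] pP by simp
  then show ?thesis using sign_eq_if_cong[OF p2 Legendre_values] by simp
qed

lemma prime_not_dvd_between: "prime (p::int) \<Longrightarrow> 0 < x \<Longrightarrow> x < p \<Longrightarrow> \<not> p dvd x"
  by (meson not_le zdvd_imp_le)

lemma coprime_between: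
  assumes "prime (p::int)" "x \<in> {1..p-1}"
  shows "coprime x p"
  using assms prime_not_dvd_between[of p x] prime_imp_coprime coprime_commute by auto

lemma nonzero_QR_Legendre:
  assumes "prime (p::int)"
  shows "nonzero_QR p = {q\<in>{1..p-1}. Legendre q p = 1}"
proof -
  have "\<not> [q = 0] (mod p)" if "q \<in> {1..p-1}" for q
    using that prime_not_dvd_between[OF assms, of q] by (auto simp: cong_0_iff)
  then show ?thesis unfolding nonzero_QR_def Legendre_def by auto
qed

lemma finite_nonzero_QR: "finite (nonzero_QR p)"
  unfolding nonzero_QR_def by (rule finite_subset[of _ "{1..p-1}"]) auto

text \<open>Since \<open>x\<^sup>2 \<equiv> (p - x)\<^sup>2\<close>, every nonzero square has exactly one root in the lower half.\<close>

lemma bij_betw_square_nonzero_QR: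
  assumes pr: "prime (p::int)" and p2: "p > 2"
  shows "bij_betw (\<lambda>x. x\<^sup>2 mod p) {1..(p - 1) div 2} (nonzero_QR p)"
proof -
  define h where "h = (p - 1) div 2"
  have "odd p" using prime_odd_int[OF pr p2] .
  then have hp: "2 * h + 1 = p" unfolding h_def by presburger
  have into: "x\<^sup>2 mod p \<in> nonzero_QR p" if x: "x \<in> {1..h}" for x
  proof -
    have "\<not> p dvd x" using prime_not_dvd_between[OF pr, of x] x hp by auto
    then have "x\<^sup>2 mod p \<noteq> 0" using pr prime_dvd_power_int by (auto simp: dvd_eq_mod_eq_0[symmetric])
    moreover have "0 \<le> x\<^sup>2 mod p" "x\<^sup>2 mod p < p" using p2 by simp_all
    moreover have "QuadRes p (x\<^sup>2 mod p)"
      unfolding QuadRes_def cong_def by (rule exI[of _ x]) simp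
    ultimately show ?thesis unfolding nonzero_QR_def by auto
  qed
  have inj: "inj_on (\<lambda>x. x\<^sup>2 mod p) {1..h}"
  proof
    fix x y assume xy: "x \<in> {1..h}" "y \<in> {1..h}" "x\<^sup>2 mod p = y\<^sup>2 mod p"
    then have "p dvd (x - y) * (x + y)"
      by (simp add: mod_eq_dvd_iff power2_eq_square algebra_simps)
    moreover have "\<not> p dvd (x + y)" using prime_not_dvd_between[OF pr, of "x + y"] xy hp by auto
    ultimately have "p dvd (x - y)" using pr prime_dvd_mult_iff by metis
    then have "[x = y] (mod p)" by (simp add: cong_iff_dvd_diff)
    then show "x = y" using xy hp by (intro cong_less_imp_eq_int) auto
  qed
  have onto: "nonzero_QR p \<subseteq> (\<lambda>x. x\<^sup>2 mod p) ` {1..h}"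
  proof
    fix q assume q: "q \<in> nonzero_QR p"
    then obtain y where "[y\<^sup>2 = q] (mod p)" unfolding nonzero_QR_def QuadRes_def by auto
    then have z: "(y mod p)\<^sup>2 mod p = q" using q unfolding nonzero_QR_def cong_def
      by (simp add: power_mod)
    moreover have "y mod p \<noteq> 0" using q z unfolding nonzero_QR_def by auto
    ultimately have z1: "1 \<le> y mod p" "y mod p < p"
      using p2 pos_mod_sign[of p y] pos_mod_bound[of p y] by linarith+
    show "q \<in> (\<lambda>x. x\<^sup>2 mod p) ` {1..h}"
    proof (cases "y mod p \<le> h")
      case True
      then show ?thesis using z z1 by (auto intro!: image_eqI[of _ _ "y mod p"])
    next
      case False
      have "(p - y mod p)\<^sup>2 = (y mod p)\<^sup>2 + p * (p - 2 * (y mod p))"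
        by (simp add: power2_eq_square algebra_simps)
      then have "(p - y mod p)\<^sup>2 mod p = q" using z by simp
      then show ?thesis using z1 False hp by (auto intro!: image_eqI[of _ _ "p - y mod p"])
    qed
  qed
  show ?thesis unfolding bij_betw_def h_def[symmetric] using inj into onto by auto
qed

lemma card_nonzero_QR:
  assumes "prime (p::int)" "p > 2"
  shows "2 * int (card (nonzero_QR p)) = p - 1"
proof -
  have "odd p" using prime_odd_int[OF assms] .
  then have "2 * ((p - 1) div 2) = p - 1" by presburger
  moreover have "int (card (nonzero_QR p)) = (p - 1) div 2"
    using bij_betw_same_card[OF bij_betw_square_nonzero_QR[OF assms]] assms(2) by simp
  ultimately show ?thesis by simp
qed

definition QR_sum :: "int \<Rightarrow> int \<Rightarrow> complex" where
  "QR_sum p t = (\<Sum>q\<in>nonzero_QR p. e_mod p (t * q))"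

definition gauss_sum :: "int \<Rightarrow> int \<Rightarrow> complex" where
  "gauss_sum p t = (\<Sum>x\<in>{0..<p}. e_mod p (t * x\<^sup>2))"

definition Legendre_class :: "int \<Rightarrow> int \<Rightarrow> int set" where
  "Legendre_class p t = {r\<in>{1..p-1}. Legendre r p = Legendre t p}"

lemma cnj_QR_sum: "cnj (QR_sum p t) = QR_sum p (- t)"
  unfolding QR_sum_def cnj_sum cnj_e_mod by simp

lemma card_Legendre_class:
  assumes pr: "prime (p::int)" and p2: "p > 2" and cop: "coprime t p"
  shows "card (Legendre_class p t) = card (nonzero_QR p)"
proof (cases "Legendre t p = 1")
  case True
  then show ?thesis using nonzero_QR_Legendre[OF pr] by (simp add: Legendre_class_def)
next
  case False
  then have "Legendre t p = -1" using Legendre_coprime[OF pr cop] by simp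
  then have "Legendre_class p t = {1..p-1} - nonzero_QR p"
    using nonzero_QR_Legendre[OF pr] Legendre_coprime[OF pr coprime_between[OF pr]]
    unfolding Legendre_class_def by fastforce
  moreover have "nonzero_QR p \<subseteq> {1..p-1}" unfolding nonzero_QR_def by auto
  ultimately show ?thesis
    using card_nonzero_QR[OF pr p2] by (simp add: card_Diff_subset finite_nonzero_QR)
qed

lemma bij_betw_mult_nonzero_QR:
  assumes pr: "prime (p::int)" and p2: "p > 2" and cop: "coprime t p"
  shows "bij_betw (\<lambda>q. (t * q) mod p) (nonzero_QR p) (Legendre_class p t)"
proof -
  let ?T = "Legendre_class p t"
  have inj: "inj_on (\<lambda>q. (t * q) mod p) (nonzero_QR p)"
  proof
    fix x y assume xy: "x \<in> nonzero_QR p" "y \<in> nonzero_QR p" "(t * x) mod p = (t * y) mod p"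
    then have "[x = y] (mod p)" using cong_mult_lcancel[of t p x y] cop by (simp add: cong_def)
    then show "x = y" using xy unfolding nonzero_QR_def by (simp add: cong_def)
  qed
  have "(t * q) mod p \<in> ?T" if q: "q \<in> nonzero_QR p" for q
  proof -
    have "coprime (t * q) p"
      using cop coprime_between[OF pr] q unfolding nonzero_QR_def by auto
    then have "(t * q) mod p \<noteq> 0"
      using pr by (metis coprime_absorb_right dvd_eq_mod_eq_0 not_prime_unit)
    moreover have "0 \<le> (t * q) mod p" "(t * q) mod p < p" using p2 by simp_all
    moreover have "Legendre q p = 1" using q nonzero_QR_Legendre[OF pr] by auto
    ultimately show ?thesis
      using Legendre_mod[of "t * q" p] Legendre_mult[OF pr p2, of t q] by (auto simp: Legendre_class_def)
  qed
  then have "(\<lambda>q. (t * q) mod p) ` nonzero_QR p = ?T"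
    using card_image[OF inj] card_Legendre_class[OF assms]
    by (intro card_subset_eq) (auto simp: Legendre_class_def intro: finite_subset[of _ "{1..p-1}"])
  then show ?thesis using inj unfolding bij_betw_def by simp
qed

lemma QR_sum_Legendre_class:
  assumes "prime (p::int)" "p > 2" "coprime t p"
  shows "QR_sum p t = (\<Sum>r\<in>Legendre_class p t. e_mod p r)"
  using sum.reindex_bij_betw[OF bij_betw_mult_nonzero_QR[OF assms], of "e_mod p"] assms(2)
  unfolding QR_sum_def by (simp add: e_mod_mod)

lemma QR_sum_uminus:
  assumes pr: "prime (p::int)" and p4: "p mod 4 = 1" and cop: "coprime t p"
  shows "QR_sum p (- t) = QR_sum p t"
proof -
  have p2: "p > 2" using prime_gt_1_int[OF pr] p4 by presburger
  have "Legendre (- t) p = Legendre t p"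
    using Legendre_mult[OF pr p2, of "-1" t] Legendre_minus_one[OF pr p4] by simp
  then show ?thesis using QR_sum_Legendre_class[OF pr p2] cop by (simp add: Legendre_class_def)
qed

text \<open>If \<open>t\<^sub>1\<close> and \<open>t\<^sub>2\<close> have opposite quadratic characters, the two sums together run once over
  all nonzero residues, whose exponentials add up to \<open>-1\<close>.\<close>

lemma QR_sum_add_opposite_Legendre:
  assumes pr: "prime (p::int)" and p2: "p > 2" and cop: "coprime t\<^sub>1 p" "coprime t\<^sub>2 p"
    and opp: "Legendre t\<^sub>1 p = - Legendre t\<^sub>2 p"
  shows "QR_sum p t\<^sub>1 + QR_sum p t\<^sub>2 = -1"
proof -
  have "Legendre_class p t\<^sub>1 \<union> Legendre_class p t\<^sub>2 = {1..p-1}"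
    and "Legendre_class p t\<^sub>1 \<inter> Legendre_class p t\<^sub>2 = {}"
    unfolding Legendre_class_def
    using opp Legendre_coprime[OF pr cop(2)] Legendre_coprime[OF pr coprime_between[OF pr]]
    by fastforce+
  then have "QR_sum p t\<^sub>1 + QR_sum p t\<^sub>2 = (\<Sum>r\<in>{1..p-1}. e_mod p r)"
    using QR_sum_Legendre_class[OF pr p2 cop(1)] QR_sum_Legendre_class[OF pr p2 cop(2)]
    by (metis finite_Un finite_atLeastAtMost_int sum.union_disjoint)
  also have "\<dots> = (\<Sum>r\<in>{0..<p}. e_mod p (1 * r)) - 1"
  proof -
    have "{0..<p} = insert 0 {1..p-1}" using p2 by auto
    then show ?thesis by simp
  qed
  also have "\<dots> = -1" using sum_e_mod[of p 1] p2 by simp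
  finally show ?thesis .
qed

text \<open>The roots \<open>x\<close> and \<open>p - x\<close> have the same square, so \<open>gauss_sum\<close> counts every nonzero
  quadratic residue twice.\<close>

lemma gauss_sum_eq_QR_sum:
  assumes pr: "prime (p::int)" and p2: "p > 2"
  shows "gauss_sum p t = 1 + 2 * QR_sum p t"
proof -
  define h where "h = (p - 1) div 2"
  define f where "f x = e_mod p (t * x\<^sup>2)" for x
  have "odd p" using prime_odd_int[OF pr p2] .
  then have hp: "2 * h + 1 = p" unfolding h_def by presburger
  have upper: "{h+1..p-1} = (\<lambda>x. p - x) ` {1..h}"
  proof
    show "{h+1..p-1} \<subseteq> (\<lambda>x. p - x) ` {1..h}"
    proof
      fix y assume "y \<in> {h+1..p-1}"
      then show "y \<in> (\<lambda>x. p - x) ` {1..h}" using hp by (intro image_eqI[of _ _ "p - y"]) auto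
    qed
  qed (use hp in auto)
  have reflect: "f (p - x) = f x" for x
  proof -
    have "t * (p - x)\<^sup>2 = t * x\<^sup>2 + p * (t * (p - 2 * x))" by (simp add: power2_eq_square algebra_simps)
    then show ?thesis unfolding f_def using p2 by (intro e_mod_cong) (auto simp: cong_def)
  qed
  have "{0..<p} = insert 0 ({1..h} \<union> {h+1..p-1})" using hp p2 by auto
  then have "gauss_sum p t = 1 + (sum f {1..h} + sum f {h+1..p-1})"
    unfolding gauss_sum_def f_def[symmetric] using hp p2
    by (simp add: sum.union_disjoint f_def)
  also have "sum f {h+1..p-1} = sum f {1..h}"
    unfolding upper by (subst sum.reindex) (auto simp: inj_on_def reflect)
  also have "sum f {1..h} = QR_sum p t"
  proof -
    have "f x = e_mod p (t * (x\<^sup>2 mod p))" for x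
      unfolding f_def using p2 by (intro e_mod_cong) (auto simp: cong_def mod_mult_right_eq)
    then show ?thesis
      using sum.reindex_bij_betw[OF bij_betw_square_nonzero_QR[OF pr p2], of "\<lambda>q. e_mod p (t * q)"]
      unfolding QR_sum_def h_def by simp
  qed
  finally show ?thesis by simp
qed

text \<open>Expanding \<open>|G|\<^sup>2\<close> and substituting \<open>x \<mapsto> x + y\<close> leaves the character sum
  \<open>\<Sum>\<^sub>y e(2 t x y / p)\<close>, which vanishes unless \<open>x = 0\<close>.\<close>

lemma gauss_sum_times_cnj:
  assumes pr: "prime (p::int)" and p2: "p > 2" and cop: "coprime t p"
  shows "gauss_sum p t * cnj (gauss_sum p t) = of_int p"
proof -
  have p0: "p > 0" using p2 by simp
  have "gauss_sum p t * cnj (gauss_sum p t) = (\<Sum>y\<in>{0..<p}. \<Sum>x\<in>{0..<p}. e_mod p (t * (x\<^sup>2 - y\<^sup>2)))"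
    unfolding gauss_sum_def sum_product cnj_sum cnj_e_mod
    by (subst sum.swap) (simp add: e_mod_add[symmetric] algebra_simps)
  also have "\<dots> = (\<Sum>y\<in>{0..<p}. \<Sum>x\<in>{0..<p}. e_mod p (t * ((x + y)\<^sup>2 - y\<^sup>2)))"
  proof (rule sum.cong[OF refl])
    fix y
    show "(\<Sum>x\<in>{0..<p}. e_mod p (t * (x\<^sup>2 - y\<^sup>2))) = (\<Sum>x\<in>{0..<p}. e_mod p (t * ((x + y)\<^sup>2 - y\<^sup>2)))"
    proof (rule sum_shift_mod[OF p0, symmetric])
      fix x
      have "[t * ((x mod p)\<^sup>2 - y\<^sup>2) = t * (x\<^sup>2 - y\<^sup>2)] (mod p)"
        by (intro cong_mult cong_diff cong_refl cong_pow) (simp add: cong_def)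
      then show "e_mod p (t * ((x mod p)\<^sup>2 - y\<^sup>2)) = e_mod p (t * (x\<^sup>2 - y\<^sup>2))"
        by (rule e_mod_cong[OF p0])
    qed
  qed
  also have "\<dots> = (\<Sum>x\<in>{0..<p}. e_mod p (t * x\<^sup>2) * (\<Sum>y\<in>{0..<p}. e_mod p ((2 * t * x) * y)))"
    by (subst sum.swap) (simp add: sum_distrib_left e_mod_add[symmetric] power2_eq_square algebra_simps)
  also have "\<dots> = (\<Sum>x\<in>{0..<p}. if x = 0 then of_int p else 0)"
  proof (intro sum.cong refl)
    fix x assume x: "x \<in> {0..<p}"
    have "\<not> p dvd 2" using p2 zdvd_imp_le[of p 2] by auto
    moreover have "\<not> p dvd t" using cop pr by (metis coprime_absorb_right not_prime_unit)
    ultimately have "p dvd 2 * t * x \<longleftrightarrow> p dvd x" using pr by (simp add: prime_dvd_mult_iff)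
    also have "\<dots> \<longleftrightarrow> x = 0" using x prime_not_dvd_between[OF pr, of x] by fastforce
    finally show "e_mod p (t * x\<^sup>2) * (\<Sum>y\<in>{0..<p}. e_mod p ((2 * t * x) * y))
        = (if x = 0 then of_int p else 0)"
      by (simp add: sum_e_mod[OF p0])
  qed
  also have "\<dots> = of_int p" using p0 by simp
  finally show ?thesis .
qed

lemma QR_sums_opposite_Legendre_via_gauss_sum:
  assumes pr: "prime (p::int)" and p4: "p mod 4 = 1" and cop: "coprime t\<^sub>1 p" "coprime t\<^sub>2 p"
    and opp: "Legendre t\<^sub>1 p = - Legendre t\<^sub>2 p"
  obtains g :: real where "g\<^sup>2 = p" "QR_sum p t\<^sub>1 = (of_real g - 1) / 2" "QR_sum p t\<^sub>2 = (- of_real g - 1) / 2"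
proof -
  have p2: "p > 2" using prime_gt_1_int[OF pr] p4 by presburger
  define G where "G = gauss_sum p t\<^sub>1"
  have G: "G = 1 + 2 * QR_sum p t\<^sub>1" unfolding G_def by (rule gauss_sum_eq_QR_sum[OF pr p2])
  have "cnj G = G"
    unfolding G cnj_QR_sum complex_cnj_add complex_cnj_mult QR_sum_uminus[OF pr p4 cop(1)] by simp
  then have "Im G = 0" by (metis cnj.sel(2) neg_equal_zero)
  then have Gg: "G = of_real (Re G)" by (simp add: complex_eq_iff)
  have "G * cnj G = of_int p" unfolding G_def by (rule gauss_sum_times_cnj[OF pr p2 cop(1)])
  then have "complex_of_real ((Re G)\<^sup>2) = complex_of_real (of_int p)"
    using \<open>cnj G = G\<close> Gg by (simp add: power2_eq_square)
  then have "(Re G)\<^sup>2 = p" by (simp only: of_real_eq_iff)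
  moreover have S1: "QR_sum p t\<^sub>1 = (of_real (Re G) - 1) / 2" using G Gg by simp
  moreover have "QR_sum p t\<^sub>2 = (- of_real (Re G) - 1) / 2"
  proof -
    have "QR_sum p t\<^sub>2 = -1 - QR_sum p t\<^sub>1"
      using QR_sum_add_opposite_Legendre[OF pr p2 cop opp] by (simp add: eq_diff_eq add.commute)
    also have "\<dots> = (- of_real (Re G) - 1) / 2" unfolding S1 by (simp add: field_simps)
    finally show ?thesis .
  qed
  ultimately show ?thesis by (rule that)
qed

lemma unit_combination_on_ellipse:
  fixes z :: complex and g p :: real
  assumes z: "norm z = 1" and g: "g\<^sup>2 = p" and p: "p > 0"
  defines "w \<equiv> z * ((of_real g - 1) / 2) + cnj z * ((- of_real g - 1) / 2)"
  shows "(Re w)\<^sup>2 + (Im w)\<^sup>2 / p = 1"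
proof -
  have "Re w = - Re z" "Im w = g * Im z" unfolding w_def by (simp_all add: field_simps)
  moreover have "(Re z)\<^sup>2 + (Im z)\<^sup>2 = 1" using z cmod_power2[of z] by simp
  ultimately show ?thesis using g p by (simp add: power_mult_distrib)
qed

lemma add_cnj_scaled_bounds:
  fixes z :: complex and k :: real
  assumes "norm z = 1" "k \<ge> 0"
  shows "of_real k * (z + cnj z) \<in> \<real>" "\<bar>Re (of_real k * (z + cnj z))\<bar> \<le> 2 * k"
proof -
  have "of_real k * (z + cnj z) = of_real (k * (2 * Re z))" by (simp add: complex_add_cnj)
  moreover have "k * \<bar>2 * Re z\<bar> \<le> k * 2"
    using assms abs_Re_le_cmod[of z] by (intro mult_left_mono) auto
  ultimately show "of_real k * (z + cnj z) \<in> \<real>" "\<bar>Re (of_real k * (z + cnj z))\<bar> \<le> 2 * k"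
    using assms(2) by (auto simp: abs_mult)
qed

lemma QR_sum_multiple: "p > 0 \<Longrightarrow> p dvd t \<Longrightarrow> QR_sum p t = of_nat (card (nonzero_QR p))"
  unfolding QR_sum_def by (simp add: e_mod_dvd)

text \<open>Writing \<open>n = p m\<close>, the lift \<open>q \<mapsto> ((a q + b) mod p) m + s\<close> turns \<open>e(x y / n)\<close> into
  \<open>e(s y / n) e(b y / p) e(a y q / p)\<close>, and it is injective on residues when \<open>a\<close> is a unit.\<close>

lemma sum_e_fun_lifted_QR:
  assumes n0: "n > 0" and pr: "prime (p::int)" and pn: "p dvd n" and cop: "coprime a p"
  shows "(\<Sum>x\<in>(\<lambda>j. (j * (n div p) + s) mod n) ` ((\<lambda>q. (a * q + b) mod p) ` nonzero_QR p).
            e_fun (of_int (x * y) / of_int n))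
         = e_fun (of_int (s * y) / of_int n) * e_mod p (b * y) * QR_sum p (a * y)"
proof -
  define m where "m = n div p"
  have p0: "p > 0" using pr prime_gt_0_int by blast
  have nm: "n = p * m" using pn unfolding m_def by simp
  have m0: "m > 0" using n0 p0 nm zero_less_mult_pos by blast
  define h where "h q = ((a * q + b) mod p * m + s) mod n" for q
  have inj: "inj_on h (nonzero_QR p)"
  proof
    fix q\<^sub>1 q\<^sub>2 assume q: "q\<^sub>1 \<in> nonzero_QR p" "q\<^sub>2 \<in> nonzero_QR p" "h q\<^sub>1 = h q\<^sub>2"
    then have "n dvd ((a * q\<^sub>1 + b) mod p - (a * q\<^sub>2 + b) mod p) * m"
      unfolding h_def by (simp add: mod_eq_dvd_iff algebra_simps)
    then have "[(a * q\<^sub>1 + b) mod p = (a * q\<^sub>2 + b) mod p] (mod p)"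
      using m0 unfolding nm by (simp add: cong_iff_dvd_diff)
    then have "[a * q\<^sub>1 + b = a * q\<^sub>2 + b] (mod p)" by (simp add: cong_def)
    then have "[a * q\<^sub>1 = a * q\<^sub>2] (mod p)" by (simp add: cong_add_rcancel)
    then have "[q\<^sub>1 = q\<^sub>2] (mod p)" using cong_mult_lcancel[of a p q\<^sub>1 q\<^sub>2] cop by simp
    then show "q\<^sub>1 = q\<^sub>2" using q unfolding nonzero_QR_def by (simp add: cong_def)
  qed
  have summand: "e_fun (of_int (h q * y) / of_int n)
      = e_fun (of_int (s * y) / of_int n) * e_mod p (b * y) * e_mod p ((a * y) * q)" for q
  proof -
    define r where "r = (a * q + b) mod p"
    have "e_fun (of_int (h q * y) / of_int n) = e_mod n ((r * m + s) * y)"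
      unfolding e_mod_def[symmetric] h_def r_def
      by (rule e_mod_cong[OF n0]) (simp add: cong_def mod_mult_left_eq)
    also have "\<dots> = e_mod p (r * y) * e_fun (of_int (s * y) / of_int n)"
      unfolding e_mod_def e_fun_add[symmetric] using p0 m0 nm by (simp add: field_simps)
    also have "e_mod p (r * y) = e_mod p ((a * q + b) * y)"
      unfolding r_def by (rule e_mod_cong[OF p0]) (simp add: cong_def mod_mult_left_eq)
    also have "\<dots> = e_mod p (b * y) * e_mod p ((a * y) * q)"
      by (simp add: e_mod_add[symmetric] algebra_simps)
    finally show ?thesis by simp
  qed
  have img: "(\<lambda>j. (j * (n div p) + s) mod n) ` ((\<lambda>q. (a * q + b) mod p) ` nonzero_QR p) = h ` nonzero_QR p"
    unfolding h_def m_def image_image by simp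
  show ?thesis unfolding img sum.reindex[OF inj] o_def summand QR_sum_def
    by (simp add: sum_distrib_left)
qed

lemma sigma_X_decomposition:
  fixes n p a b c y :: int and A :: "int set"
  assumes n0: "n > 0" and pr: "prime p" and pn: "p dvd n"
    and a_cop: "coprime a p" and c_cop: "coprime c p"
    and A_eq: "A = (\<lambda>j. (j * (n div p) + 1) mod n) ` ((\<lambda>q. (a * q + b) mod p) ` nonzero_QR p)
               \<union> (\<lambda>j. (j * (n div p) - 1) mod n) ` ((\<lambda>q. (c * q - b) mod p) ` nonzero_QR p)"
    and A_disj: "(\<lambda>j. (j * (n div p) + 1) mod n) ` ((\<lambda>q. (a * q + b) mod p) ` nonzero_QR p)
               \<inter> (\<lambda>j. (j * (n div p) - 1) mod n) ` ((\<lambda>q. (c * q - b) mod p) ` nonzero_QR p) = {}"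
  defines "z \<equiv> e_fun (of_int y / of_int n) * e_mod p (b * y)"
  shows "sigma_X n (orbit_set n A 1) y = z * QR_sum p (a * y) + cnj z * QR_sum p (c * y)"
proof -
  define P where "P = (\<lambda>j. (j * (n div p) + 1) mod n) ` ((\<lambda>q. (a * q + b) mod p) ` nonzero_QR p)"
  define M where "M = (\<lambda>j. (j * (n div p) + (-1)) mod n) ` ((\<lambda>q. (c * q + (-b)) mod p) ` nonzero_QR p)"
  have A: "A = P \<union> M" and disj: "P \<inter> M = {}"
    using A_eq A_disj unfolding P_def M_def by simp_all
  have "x mod n = x" if "x \<in> A" for x using that unfolding A P_def M_def by auto
  then have "orbit_set n A 1 = A" unfolding orbit_set_def by simp
  moreover have "finite P" "finite M" unfolding P_def M_def by (simp_all add: finite_nonzero_QR)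
  ultimately have "sigma_X n (orbit_set n A 1) y
      = (\<Sum>x\<in>P. e_fun (of_int (x * y) / of_int n)) + (\<Sum>x\<in>M. e_fun (of_int (x * y) / of_int n))"
    unfolding sigma_X_def A by (simp add: sum.union_disjoint disj)
  also have "(\<Sum>x\<in>P. e_fun (of_int (x * y) / of_int n)) = z * QR_sum p (a * y)"
    unfolding P_def using sum_e_fun_lifted_QR[OF n0 pr pn a_cop, where s = 1 and b = b and y = y] by (simp add: z_def)
  also have "(\<Sum>x\<in>M. e_fun (of_int (x * y) / of_int n)) = cnj z * QR_sum p (c * y)"
    unfolding M_def using sum_e_fun_lifted_QR[OF n0 pr pn c_cop, where s = "-1" and b = "-b" and y = y]
    by (simp add: z_def cnj_e_fun cnj_e_mod)
  finally show ?thesis .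
qed

theorem proposition5p1:
  fixes n p a b c :: int and A :: "int set"
  assumes n_pos: "n > 0"
    and p_prime: "prime p" and p_mod4: "p mod 4 = 1" and p_dvd: "p dvd n"
    and a_cop: "coprime a p" and b_cop: "coprime b p" and c_cop: "coprime c p"
    and leg: "Legendre a p = - Legendre c p"
    and A_sub: "subgroup A (units_of (residue_ring n))"
    and A_eq: "A = (\<lambda>j. (j * (n div p) + 1) mod n) ` ((\<lambda>q. (a * q + b) mod p) ` nonzero_QR p)
               \<union> (\<lambda>j. (j * (n div p) - 1) mod n) ` ((\<lambda>q. (c * q - b) mod p) ` nonzero_QR p)"
    and A_disj: "(\<lambda>j. (j * (n div p) + 1) mod n) ` ((\<lambda>q. (a * q + b) mod p) ` nonzero_QR p)
               \<inter> (\<lambda>j. (j * (n div p) - 1) mod n) ` ((\<lambda>q. (c * q - b) mod p) ` nonzero_QR p) = {}"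
  shows "\<forall>y\<in>{0..<n}.
           (p dvd y \<longrightarrow> sigma_X n (orbit_set n A 1) y \<in> \<real> \<and>
              real_of_int (1 - p) \<le> Re (sigma_X n (orbit_set n A 1) y) \<and>
              Re (sigma_X n (orbit_set n A 1) y) \<le> real_of_int (p - 1))
         \<and> (\<not> p dvd y \<longrightarrow>
              (Re (sigma_X n (orbit_set n A 1) y))\<^sup>2 + (Im (sigma_X n (orbit_set n A 1) y))\<^sup>2 / real_of_int p = 1)"
proof (intro ballI conjI impI)
  fix y
  define z where "z = e_fun (of_int y / of_int n) * e_mod p (b * y)"
  have p2: "p > 2" using prime_gt_1_int[OF p_prime] p_mod4 by presburger
  have z: "norm z = 1" unfolding z_def norm_mult norm_e_fun norm_e_mod by simp
  have \<sigma>: "sigma_X n (orbit_set n A 1) y = z * QR_sum p (a * y) + cnj z * QR_sum p (c * y)"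
    unfolding z_def by (rule sigma_X_decomposition[OF n_pos p_prime p_dvd a_cop c_cop A_eq A_disj])
  {
    assume "p dvd y"
    then have "sigma_X n (orbit_set n A 1) y = of_real (card (nonzero_QR p)) * (z + cnj z)"
      unfolding \<sigma> using p2 by (simp add: QR_sum_multiple algebra_simps)
    moreover have "2 * real (card (nonzero_QR p)) = of_int (p - 1)"
      using card_nonzero_QR[OF p_prime p2] by linarith
    ultimately show "sigma_X n (orbit_set n A 1) y \<in> \<real>"
      "real_of_int (1 - p) \<le> Re (sigma_X n (orbit_set n A 1) y)"
      "Re (sigma_X n (orbit_set n A 1) y) \<le> real_of_int (p - 1)"
      using add_cnj_scaled_bounds[OF z, of "card (nonzero_QR p)"] by auto
  }
  {
    assume "\<not> p dvd y"
    then have "coprime y p" using p_prime prime_imp_coprime coprime_commute by blast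
    then have "coprime (a * y) p" "coprime (c * y) p" using a_cop c_cop by simp_all
    moreover have "Legendre (a * y) p = - Legendre (c * y) p"
      using leg Legendre_mult[OF p_prime p2] by simp
    ultimately obtain g :: real where g: "g\<^sup>2 = p"
      and S: "QR_sum p (a * y) = (of_real g - 1) / 2" "QR_sum p (c * y) = (- of_real g - 1) / 2"
      using QR_sums_opposite_Legendre_via_gauss_sum[OF p_prime p_mod4] by blast
    show "(Re (sigma_X n (orbit_set n A 1) y))\<^sup>2 + (Im (sigma_X n (orbit_set n A 1) y))\<^sup>2 / real_of_int p = 1"
      unfolding \<sigma> S by (rule unit_combination_on_ellipse[OF z g]) (use p2 in simp)
  }
qed

end
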